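(* Let $N\in\mathbb N$, let $A\in\mathbb R^{N\times N}$ be invertible and let $p<1$. Suppose that $A^{-1}\ge 0$ entrywise and that $(A^{-1})_{ii}>0$ for all $i=1,\dots,N$. Then the equation $Ax=x^{p}$ has a solution $x\in\mathbb R^N$ with $x>0$.
   Context: Inequalities between vectors and matrices are understood componentwise. For $x\in(0,\infty)^N$ and $p\in\mathbb R$, $x^p:=(x_1^p,\dots,x_N^p)^\top$. *)

theory Defs
  imports "HOL-Analysis.Analysis"
begin

end

theory Submission
  imports Defs
begin

(* Write B = A^-1, so that A x = x^p means x = B x^p. For 0 <= p < 1 the map x |-> B x^p is
   monotone; it maps the box [l, b] into itself, where l_i = B_ii^(1/(1-p)) solves
   B_ii l_i^p = l_i and b is large (the map grows like b^p with p < 1), and Brouwer's theorem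
   gives a fixed point. For p < 0 the map is antitone, so one uses instead
   x |-> ((B x^p)_i x_i^-p)^(1/(1-p)), which has the same positive fixed points, is bounded
   below by l because (B x^p)_i >= B_ii x_i^p, and again maps a large box into itself. *)

lemma brouwer_cbox:
  fixes f :: "'a::euclidean_space \<Rightarrow> 'a"
  assumes "cbox a b \<noteq> {}" and "continuous_on (cbox a b) f"
    and "\<And>x. x \<in> cbox a b \<Longrightarrow> f x \<in> cbox a b"
  obtains x where "x \<in> cbox a b" and "f x = x"
  using brouwer[OF compact_cbox convex_box(1) assms(1,2)] assms(3) by blast

lemma exists_bound_powr:
  fixes l c :: "real ^ 'n"
  assumes "0 < q"
  shows "\<exists>b>0. \<forall>i. l $ i \<le> b \<and> c $ i \<le> b powr q"
proof -
  define b where "b = 1 + (\<Sum>i\<in>UNIV. \<bar>l $ i\<bar>) + (\<Sum>i\<in>UNIV. \<bar>c $ i\<bar>) powr (1 / q)"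
  have l_le: "l $ i \<le> b" for i
  proof -
    have "l $ i \<le> (\<Sum>i\<in>UNIV. \<bar>l $ i\<bar>)"
      using member_le_sum[of i UNIV "\<lambda>i. \<bar>l $ i\<bar>"] by simp
    then show ?thesis
      unfolding b_def by (smt (verit) powr_ge_zero)
  qed
  have c_le: "c $ i \<le> b powr q" for i
  proof -
    let ?C = "\<Sum>i\<in>UNIV. \<bar>c $ i\<bar>"
    have "c $ i \<le> ?C"
      using member_le_sum[of i UNIV "\<lambda>i. \<bar>c $ i\<bar>"] by simp
    also have "\<dots> = (?C powr (1 / q)) powr q"
      using assms by (simp add: powr_powr sum_nonneg)
    also have "\<dots> \<le> b powr q"
      unfolding b_def using assms by (intro powr_mono2) (auto simp: sum_nonneg)
    finally show ?thesis .
  qed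
  have "0 < b"
    unfolding b_def by (smt (verit) powr_ge_zero sum_nonneg abs_ge_zero)
  with l_le c_le show ?thesis by blast
qed

lemma powr_rescaled_fixpoint_eq:
  fixes s t p :: real
  assumes "0 < s" and "0 < t" and "p < 1"
    and t_eq: "t = (s * t powr - p) powr (1 / (1 - p))"
  shows "t = s"
proof -
  have "t * t powr - p = t powr (1 - p)"
    using \<open>0 < t\<close> by (simp add: powr_diff powr_minus_divide)
  also have "\<dots> = ((s * t powr - p) powr (1 / (1 - p))) powr (1 - p)"
    using t_eq by (rule arg_cong)
  also have "\<dots> = s * t powr - p"
    using \<open>0 < s\<close> \<open>0 < t\<close> \<open>p < 1\<close> by (simp add: powr_powr)
  finally show ?thesis
    using \<open>0 < t\<close> by simp
qed

lemma matrix_inv_right: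
  fixes A :: "'a::semiring_1 ^ 'n ^ 'm"
  assumes "invertible A"
  shows "A ** matrix_inv A = mat 1"
proof -
  have "\<exists>A'. A ** A' = mat 1 \<and> A' ** A = mat 1"
    using assms by (simp add: invertible_def)
  from someI_ex[OF this] show ?thesis
    unfolding matrix_inv_def by blast
qed

lemma nonneg_matrix_vector_mult_ge_diag:
  fixes B :: "real ^ 'n ^ 'n"
  assumes "\<And>i j. 0 \<le> B $ i $ j" and "\<And>j. 0 \<le> y $ j"
  shows "B $ i $ i * y $ i \<le> (B *v y) $ i"
  unfolding matrix_vector_mult_def
  by (simp add: assms member_le_sum[of i UNIV "\<lambda>j. B $ i $ j * y $ j"])

lemma nonneg_matrix_vector_mult_mono:
  fixes B :: "real ^ 'n ^ 'm"
  assumes "\<And>i j. 0 \<le> B $ i $ j" and "\<And>j. y $ j \<le> z $ j"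
  shows "(B *v y) $ i \<le> (B *v z) $ i"
  unfolding matrix_vector_mult_def
  by (simp add: assms sum_mono mult_left_mono)

lemma matrix_vector_mult_vec:
  fixes B :: "'a::comm_semiring_1 ^ 'n ^ 'm"
  shows "(B *v vec t) $ i = t * (B *v vec 1) $ i"
  by (simp add: matrix_vector_mult_def sum_distrib_left mult.commute)

definition powr_vec :: "real ^ 'n \<Rightarrow> real \<Rightarrow> real ^ 'n" where
  "powr_vec x p = (\<chi> i. x $ i powr p)"

lemma powr_vec_nth [simp]: "powr_vec x p $ i = x $ i powr p"
  by (simp add: powr_vec_def)

lemma continuous_on_powr_vec:
  assumes "\<And>x i. x \<in> S \<Longrightarrow> 0 < x $ i"
  shows "continuous_on S (\<lambda>x. powr_vec x p)"
  unfolding powr_vec_def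
  by (intro continuous_intros) (metis assms less_irrefl)


lemma nonneg_matrix_powr_fixpoint_nonneg_exponent:
  fixes B :: "real ^ 'n ^ 'n"
  assumes B_nonneg: "\<And>i j. 0 \<le> B $ i $ j" and B_diag: "\<And>i. 0 < B $ i $ i"
    and "0 \<le> p" and "p < 1"
  shows "\<exists>x. (\<forall>i. 0 < x $ i) \<and> B *v powr_vec x p = x"
proof -
  define l where "l = (\<chi> i. B $ i $ i powr (1 / (1 - p)))"
  have l_pos: "0 < l $ i" for i
    using B_diag[of i] by (simp add: l_def)
  have l_eq: "l $ i = B $ i $ i * l $ i powr p" for i
  proof -
    have "l $ i = B $ i $ i powr (1 + p / (1 - p))"
      using \<open>p < 1\<close> by (simp add: l_def field_simps)
    also have "\<dots> = B $ i $ i * l $ i powr p"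
      using B_diag[of i] by (simp add: l_def powr_add powr_powr)
    finally show ?thesis .
  qed
  obtain b where "0 < b" and b: "\<And>i. l $ i \<le> b \<and> (B *v vec 1) $ i \<le> b powr (1 - p)"
    using exists_bound_powr[of "1 - p" l "B *v vec 1"] \<open>p < 1\<close> by auto
  let ?box = "cbox l (vec b)"
  let ?F = "\<lambda>x. B *v powr_vec x p"
  have pos: "0 < x $ i" if "x \<in> ?box" for x i
    using that l_pos[of i] by (auto simp: mem_box_cart intro: less_le_trans)
  have "?F x \<in> ?box" if x: "x \<in> ?box" for x
    unfolding mem_box_cart
  proof (intro allI conjI)
    fix i
    have "l $ i = B $ i $ i * l $ i powr p"
      by (rule l_eq)
    also have "\<dots> \<le> B $ i $ i * x $ i powr p"
      using x B_diag l_pos \<open>0 \<le> p\<close>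
      by (intro mult_left_mono powr_mono2) (auto simp: mem_box_cart less_imp_le)
    also have "\<dots> \<le> ?F x $ i"
      using nonneg_matrix_vector_mult_ge_diag[OF B_nonneg, of "powr_vec x p"] by simp
    finally show "l $ i \<le> ?F x $ i" .
    have "?F x $ i \<le> (B *v vec (b powr p)) $ i"
      using x pos[OF x] \<open>0 \<le> p\<close>
      by (intro nonneg_matrix_vector_mult_mono B_nonneg) (auto simp: mem_box_cart powr_mono2 less_imp_le)
    also have "\<dots> = b powr p * (B *v vec 1) $ i"
      by (rule matrix_vector_mult_vec)
    also have "\<dots> \<le> b powr p * b powr (1 - p)"
      using b by (simp add: mult_left_mono)
    also have "\<dots> = b"
      using \<open>0 < b\<close> by (simp add: powr_add [symmetric])
    finally show "?F x $ i \<le> vec b $ i" by simp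
  qed
  moreover have "continuous_on ?box ?F"
    by (intro continuous_on_compose2[OF matrix_vector_mult_linear_continuous_on continuous_on_powr_vec])
      (auto intro: pos)
  moreover have "l \<in> ?box"
    using b by (simp add: mem_box_cart)
  ultimately obtain x where "x \<in> ?box" and "?F x = x"
    using brouwer_cbox[of l "vec b" ?F] by blast
  with pos show ?thesis by blast
qed

lemma nonneg_matrix_powr_fixpoint_neg_exponent:
  fixes B :: "real ^ 'n ^ 'n"
  assumes B_nonneg: "\<And>i j. 0 \<le> B $ i $ j" and B_diag: "\<And>i. 0 < B $ i $ i"
    and "p < 0"
  shows "\<exists>x. (\<forall>i. 0 < x $ i) \<and> B *v powr_vec x p = x"
proof -
  define \<theta> where "\<theta> = 1 / (1 - p)"
  have "0 < \<theta>" and \<theta>_inv: "(1 - p) * \<theta> = 1"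
    using \<open>p < 0\<close> by (simp_all add: \<theta>_def)
  define l where "l = (\<chi> i. B $ i $ i powr \<theta>)"
  have l_pos: "0 < l $ i" for i
    using B_diag[of i] by (simp add: l_def)
  obtain b where "0 < b" and b: "\<And>i. l $ i \<le> b \<and> (B *v powr_vec l p) $ i \<le> b powr 1"
    using exists_bound_powr[of 1 l "B *v powr_vec l p"] by auto
  let ?box = "cbox l (vec b)"
  let ?S = "\<lambda>x. B *v powr_vec x p"
  let ?G = "\<lambda>x. \<chi> i. (?S x $ i * x $ i powr - p) powr \<theta>"
  have pos: "0 < x $ i" if "x \<in> ?box" for x i
    using that l_pos[of i] by (auto simp: mem_box_cart intro: less_le_trans)
  have diag_le: "B $ i $ i * x $ i powr p \<le> ?S x $ i" for x i
    using nonneg_matrix_vector_mult_ge_diag[OF B_nonneg, of "powr_vec x p"] by simp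
  have S_pos: "0 < ?S x $ i" if "x \<in> ?box" for x i
    using B_diag[of i] pos[OF that, of i] diag_le[of i x] by (smt (verit) mult_pos_pos powr_gt_zero)
  have "?G x \<in> ?box" if x: "x \<in> ?box" for x
    unfolding mem_box_cart
  proof (intro allI conjI)
    fix i
    have "B $ i $ i = B $ i $ i * x $ i powr p * x $ i powr - p"
      using pos[OF x, of i] by (simp add: powr_minus_divide)
    also have "\<dots> \<le> ?S x $ i * x $ i powr - p"
      using diag_le by (simp add: mult_right_mono)
    finally show "l $ i \<le> ?G x $ i"
      using B_diag[of i] \<open>0 < \<theta>\<close> by (simp add: l_def powr_mono2)
    have "?S x $ i \<le> (B *v powr_vec l p) $ i"
      using x l_pos \<open>p < 0\<close>
      by (intro nonneg_matrix_vector_mult_mono B_nonneg) (auto simp: mem_box_cart powr_mono2')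
    also have "\<dots> \<le> b"
      using b \<open>0 < b\<close> by simp
    finally have "?S x $ i * x $ i powr - p \<le> b * b powr - p"
      using x pos[OF x, of i] \<open>p < 0\<close> \<open>0 < b\<close>
      by (intro mult_mono powr_mono2) (auto simp: mem_box_cart)
    also have "\<dots> = b powr (1 - p)"
      using \<open>0 < b\<close> by (simp add: powr_diff powr_minus_divide)
    finally have "?G x $ i \<le> (b powr (1 - p)) powr \<theta>"
      using S_pos[OF x, of i] pos[OF x, of i] \<open>0 < \<theta>\<close> by (simp add: powr_mono2)
    also have "\<dots> = b"
      using \<open>0 < b\<close> \<theta>_inv by (simp add: powr_powr)
    finally show "?G x $ i \<le> vec b $ i" by simp
  qed
  moreover have "continuous_on ?box ?G"
  proof -
    have "continuous_on ?box ?S"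
      by (intro continuous_on_compose2[OF matrix_vector_mult_linear_continuous_on continuous_on_powr_vec])
        (auto intro: pos)
    then show ?thesis
      by (intro continuous_intros) (use pos S_pos in \<open>auto intro!: mult_pos_pos simp: less_imp_neq[symmetric]\<close>)
  qed
  moreover have "l \<in> ?box"
    using b by (simp add: mem_box_cart)
  ultimately obtain x where x: "x \<in> ?box" and "?G x = x"
    using brouwer_cbox[of l "vec b" ?G] by blast
  have "x $ i = ?S x $ i" for i
  proof (rule powr_rescaled_fixpoint_eq)
    show "x $ i = (?S x $ i * x $ i powr - p) powr (1 / (1 - p))"
      using \<open>?G x = x\<close> by (metis \<theta>_def vec_lambda_beta)
  qed (use x pos S_pos \<open>p < 0\<close> in auto)
  with x pos show ?thesis
    by (metis vec_eq_iff)
qed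

lemma nonneg_matrix_powr_fixpoint:
  fixes B :: "real ^ 'n ^ 'n"
  assumes "\<And>i j. 0 \<le> B $ i $ j" and "\<And>i. 0 < B $ i $ i" and "p < 1"
  shows "\<exists>x. (\<forall>i. 0 < x $ i) \<and> B *v powr_vec x p = x"
proof (cases "0 \<le> p")
  case True
  with assms show ?thesis
    by (intro nonneg_matrix_powr_fixpoint_nonneg_exponent)
next
  case False
  with assms show ?thesis
    by (intro nonneg_matrix_powr_fixpoint_neg_exponent) simp_all
qed

theorem lemma3p1:
  fixes A :: "real ^ 'n ^ 'n" and p :: real
  assumes "invertible A"
    and "p < 1"
    and "\<forall>i j. matrix_inv A $ i $ j \<ge> 0"
    and "\<forall>i. matrix_inv A $ i $ i > 0"
  shows "\<exists>x :: real ^ 'n. (\<forall>i. x $ i > 0) \<and> A *v x = (\<chi> i. (x $ i) powr p)"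
proof -
  obtain x where pos: "\<forall>i. 0 < x $ i" and x: "matrix_inv A *v powr_vec x p = x"
    using nonneg_matrix_powr_fixpoint[of "matrix_inv A" p] assms(2-4) by blast
  have "A *v x = (A ** matrix_inv A) *v powr_vec x p"
    by (metis x matrix_vector_mul_assoc)
  also have "\<dots> = powr_vec x p"
    by (simp add: matrix_inv_right[OF \<open>invertible A\<close>])
  finally show ?thesis
    using pos by (auto simp: powr_vec_def)
qed

end
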